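(* Let $d\ge 2$ and let $\rho$ be any density matrix on $\mathbb{C}^d$. Then $$\frac{C_{l_1}(\rho)^2}{(d-1)^2} + M_l(\rho) \le 1 .$$
   Context: Fix the computational (reference) basis $\{|i\rangle\}_{i=1}^d$ of $\mathbb{C}^d$ and write $\rho_{ij}=\langle i|\rho|j\rangle$. The $l_1$ norm of coherence is $C_{l_1}(\rho)=\sum_{i\neq j}|\rho_{ij}|$. The mixedness (normalized linear entropy) is $M_l(\rho)=\frac{d}{d-1}\left(1-\mathrm{Tr}\,\rho^2\right)$. *)

theory Defs
  imports "Jordan_Normal_Form.Matrix" "Jordan_Normal_Form.Conjugate"
begin

definition hermitian_mat :: "complex mat \<Rightarrow> bool" where
  "hermitian_mat A \<longleftrightarrow> square_mat A \<and>
     (\<forall>i < dim_row A. \<forall>j < dim_row A. A $$ (i, j) = cnj (A $$ (j, i)))"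

definition psd_mat :: "complex mat \<Rightarrow> bool" where
  "psd_mat A \<longleftrightarrow> square_mat A \<and>
     (\<forall>v \<in> carrier_vec (dim_row A).
        Im (conjugate v \<bullet> (A *\<^sub>v v)) = 0 \<and> Re (conjugate v \<bullet> (A *\<^sub>v v)) \<ge> 0)"

definition mat_trace :: "complex mat \<Rightarrow> complex" where
  "mat_trace A = (\<Sum>i<dim_row A. A $$ (i, i))"

definition density_mat :: "nat \<Rightarrow> complex mat \<Rightarrow> bool" where
  "density_mat d \<rho> \<longleftrightarrow> \<rho> \<in> carrier_mat d d \<and> hermitian_mat \<rho> \<and> psd_mat \<rho> \<and> mat_trace \<rho> = 1"

definition coh_l1 :: "complex mat \<Rightarrow> real" where
  "coh_l1 \<rho> = (\<Sum>i<dim_row \<rho>. \<Sum>j<dim_col \<rho>. if i \<noteq> j then cmod (\<rho> $$ (i, j)) else 0)"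

definition mixedness :: "nat \<Rightarrow> complex mat \<Rightarrow> real" where
  "mixedness d \<rho> = (real d / (real d - 1)) * (1 - Re (mat_trace (\<rho> * \<rho>)))"

end

theory Submission
  imports Defs
begin

text \<open>
  Split \<open>Tr \<rho>\<^sup>2 = \<Sum>\<^sub>i\<^sub>,\<^sub>j |\<rho>\<^sub>i\<^sub>j|\<^sup>2\<close> into its off-diagonal part \<open>S\<close> and its diagonal part \<open>Q\<close>.
  Cauchy-Schwarz over the \<open>d(d-1)\<close> off-diagonal entries gives \<open>C\<^sub>l\<^sub>1(\<rho>)\<^sup>2 \<le> d(d-1) S\<close>,
  and over the diagonal, whose entries sum to \<open>Tr \<rho> = 1\<close>, it gives \<open>d Q \<ge> 1\<close>.
  Hence \<open>C\<^sub>l\<^sub>1(\<rho>)\<^sup>2 + d(d-1)(1 - Tr \<rho>\<^sup>2) \<le> d(d-1)(1 - Q) \<le> (d-1)\<^sup>2\<close>.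
\<close>

lemma sum_squared_le_card_mult_sum_squares:
  fixes f :: "'a \<Rightarrow> real"
  assumes "finite A"
  shows "(\<Sum>x\<in>A. f x)\<^sup>2 \<le> real (card A) * (\<Sum>x\<in>A. (f x)\<^sup>2)"
proof -
  have "0 \<le> (\<Sum>x\<in>A. \<Sum>y\<in>A. (f x - f y)\<^sup>2)"
    by (intro sum_nonneg) auto
  also have "\<dots> = 2 * (real (card A) * (\<Sum>x\<in>A. (f x)\<^sup>2)) - 2 * (\<Sum>x\<in>A. f x)\<^sup>2"
    by (simp add: power2_diff sum_subtractf sum.distrib sum_distrib_left sum_distrib_right
        power2_eq_square mult.assoc algebra_simps)
  finally show ?thesis by simp
qed

definition off_diag :: "nat \<Rightarrow> (nat \<times> nat) set" where
  "off_diag n = {(i, j). i < n \<and> j < n \<and> i \<noteq> j}"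

lemma off_diag_eq_Diff: "off_diag n = {..<n} \<times> {..<n} - (\<lambda>i. (i, i)) ` {..<n}"
  unfolding off_diag_def by auto

lemma finite_off_diag [simp]: "finite (off_diag n)"
  unfolding off_diag_eq_Diff by simp

lemma card_off_diag: "real (card (off_diag n)) = real n * (real n - 1)"
proof -
  have "card ((\<lambda>i. (i, i)) ` {..<n}) = n"
    by (subst card_image) (auto simp: inj_on_def)
  then have "card (off_diag n) = n * n - n"
    unfolding off_diag_eq_Diff by (subst card_Diff_subset) (auto simp: card_cartesian_product)
  then show ?thesis
    by (simp add: algebra_simps)
qed

lemma sum_nested_eq_off_diag_plus_diag:
  "(\<Sum>i<n. \<Sum>j<n. f i j) = (\<Sum>(i, j)\<in>off_diag n. f i j) + (\<Sum>i<n. f i i)"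
proof -
  have "(\<Sum>i<n. \<Sum>j<n. f i j) = (\<Sum>(i, j)\<in>{..<n} \<times> {..<n}. f i j)"
    by (simp add: sum.cartesian_product)
  also have "\<dots> = (\<Sum>(i, j)\<in>off_diag n. f i j) + (\<Sum>(i, j)\<in>(\<lambda>i. (i, i)) ` {..<n}. f i j)"
    unfolding off_diag_eq_Diff by (subst sum.subset_diff[of "(\<lambda>i. (i, i)) ` {..<n}"]) auto
  also have "(\<Sum>(i, j)\<in>(\<lambda>i. (i, i)) ` {..<n}. f i j) = (\<Sum>i<n. f i i)"
    by (subst sum.reindex) (auto simp: inj_on_def)
  finally show ?thesis .
qed

lemma coh_l1_eq_sum_off_diag:
  assumes "A \<in> carrier_mat n n"
  shows "coh_l1 A = (\<Sum>(i, j)\<in>off_diag n. cmod (A $$ (i, j)))"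
  using assms sum_nested_eq_off_diag_plus_diag[of "\<lambda>i j. if i \<noteq> j then cmod (A $$ (i, j)) else 0" n]
  unfolding coh_l1_def by (auto simp: off_diag_def intro!: sum.cong)

lemma coh_l1_squared_le:
  assumes "A \<in> carrier_mat n n"
  shows "(coh_l1 A)\<^sup>2 \<le> real n * (real n - 1) * (\<Sum>(i, j)\<in>off_diag n. (cmod (A $$ (i, j)))\<^sup>2)"
  using sum_squared_le_card_mult_sum_squares[of "off_diag n" "\<lambda>(i, j). cmod (A $$ (i, j))"]
  unfolding coh_l1_eq_sum_off_diag[OF assms] card_off_diag
  by (simp add: case_prod_beta mult.commute)

lemma hermitian_mat_entry_swap:
  assumes "hermitian_mat A" "i < dim_row A" "j < dim_row A"
  shows "A $$ (j, i) = cnj (A $$ (i, j))"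
  using assms unfolding hermitian_mat_def by metis

lemma hermitian_mat_diag_real:
  assumes "hermitian_mat A" "i < dim_row A"
  shows "A $$ (i, i) = of_real (Re (A $$ (i, i)))"
proof -
  have "A $$ (i, i) = cnj (A $$ (i, i))"
    using hermitian_mat_entry_swap[OF assms assms(2)] .
  then show ?thesis
    by (simp add: complex_eq_iff)
qed

lemma trace_square_hermitian:
  assumes "A \<in> carrier_mat n n" "hermitian_mat A"
  shows "Re (mat_trace (A * A)) = (\<Sum>i<n. \<Sum>j<n. (cmod (A $$ (i, j)))\<^sup>2)"
proof -
  have "Re (mat_trace (A * A)) = (\<Sum>i<n. \<Sum>j<n. Re (A $$ (i, j) * A $$ (j, i)))"
    using assms(1) unfolding mat_trace_def by (simp add: scalar_prod_def atLeast0LessThan)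
  also have "\<dots> = (\<Sum>i<n. \<Sum>j<n. (cmod (A $$ (i, j)))\<^sup>2)"
  proof (intro sum.cong refl)
    fix i j assume "i \<in> {..<n}" "j \<in> {..<n}"
    then have "A $$ (j, i) = cnj (A $$ (i, j))"
      using assms by (intro hermitian_mat_entry_swap) auto
    then show "Re (A $$ (i, j) * A $$ (j, i)) = (cmod (A $$ (i, j)))\<^sup>2"
      by (simp add: cmod_power2 power2_eq_square[of "Re _"] power2_eq_square[of "Im _"])
  qed
  finally show ?thesis .
qed

lemma coh_l1_squared_mixedness_bound:
  assumes "A \<in> carrier_mat n n" "hermitian_mat A" "mat_trace A = 1"
  shows "(coh_l1 A)\<^sup>2 + real n * (real n - 1) * (1 - Re (mat_trace (A * A))) \<le> (real n - 1)\<^sup>2"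
proof -
  define S where "S = (\<Sum>(i, j)\<in>off_diag n. (cmod (A $$ (i, j)))\<^sup>2)"
  define Q where "Q = (\<Sum>i<n. (Re (A $$ (i, i)))\<^sup>2)"
  have "(\<Sum>i<n. (cmod (A $$ (i, i)))\<^sup>2) = Q"
    unfolding Q_def using assms(1) hermitian_mat_diag_real[OF assms(2)]
    by (intro sum.cong refl) (metis carrier_matD(1) lessThan_iff norm_of_real power2_abs)
  then have trace_square: "Re (mat_trace (A * A)) = S + Q"
    unfolding trace_square_hermitian[OF assms(1,2)] sum_nested_eq_off_diag_plus_diag S_def by simp
  have trace_Re: "(\<Sum>i<n. Re (A $$ (i, i))) = 1"
    using arg_cong[OF assms(3), of Re] assms(1) unfolding mat_trace_def by simp
  then have "1 \<le> real n * Q"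
    using sum_squared_le_card_mult_sum_squares[of "{..<n}" "\<lambda>i. Re (A $$ (i, i))"]
    unfolding Q_def by simp
  moreover have "n \<ge> 1"
    using trace_Re by (cases n) auto
  ultimately have "(real n - 1) * (real n * (1 - Q)) \<le> (real n - 1) * (real n - 1)"
    by (intro mult_left_mono) (auto simp: algebra_simps)
  moreover have "(coh_l1 A)\<^sup>2 \<le> real n * (real n - 1) * S"
    unfolding S_def by (rule coh_l1_squared_le[OF assms(1)])
  ultimately show ?thesis
    unfolding trace_square by (simp add: power2_eq_square algebra_simps)
qed

theorem theorem1:
  fixes d :: nat and \<rho> :: "complex mat"
  assumes "d \<ge> 2" and "density_mat d \<rho>"
  shows "(coh_l1 \<rho>)\<^sup>2 / (real d - 1)\<^sup>2 + mixedness d \<rho> \<le> 1"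
proof -
  have bound: "(coh_l1 \<rho>)\<^sup>2 + real d * (real d - 1) * (1 - Re (mat_trace (\<rho> * \<rho>))) \<le> (real d - 1)\<^sup>2"
    using assms(2) unfolding density_mat_def by (intro coh_l1_squared_mixedness_bound) auto
  have pos: "(real d - 1)\<^sup>2 > 0"
    using assms(1) by simp
  have "mixedness d \<rho> = real d * (real d - 1) * (1 - Re (mat_trace (\<rho> * \<rho>))) / (real d - 1)\<^sup>2"
    using pos unfolding mixedness_def by (simp add: power2_eq_square)
  then show ?thesis
    using bound pos by (simp add: add_divide_distrib[symmetric])
qed

end
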